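(* Let $m \geq 0$, $n \geq 1$ be integers and let $c = (c^t; c^b)$ be a stable configuration on $K_{m,n}^0$. For $j \in \{1,\ldots,n\}$ define $k_j := |\{ i \in \{1,\ldots,m\} : c^t_i < j\}|$, and let $(\tilde{c}^b_1, \ldots, \tilde{c}^b_n)$ be the non-decreasing rearrangement of $c^b$. Then $c$ is deterministically recurrent if and only if $\tilde{c}^b_j \geq k_j$ for all $j \in \{1, \ldots, n\}$.
   Context: $K_{m,n}^0$ is the complete bipartite graph with "top" vertices $v^t_0, v^t_1, \ldots, v^t_m$ and "bottom" vertices $v^b_1, \ldots, v^b_n$, with an edge between every top vertex and every bottom vertex; $v^t_0$ is the sink. A configuration is a vector $c = (c^t_1, \ldots, c^t_m; c^b_1, \ldots, c^b_n)$ of non-negative integers ($c^*_i$ = number of grains at $v^*_i$). $c$ is stable if $c^t_i < n$ for all $i$ and $c^b_j < m+1$ for all $j$ (number of grains less than the degree). Abelian sandpile model (ASM): an unstable non-sink vertex topples by sending one grain to each of its neighbours (for bottom vertices this includes the sink); grains sent to the sink disappear. Repeated toppling from any configuration reaches a unique stable configuration independent of toppling order. In the Markov chain on stable configurations which at each step adds a grain to a uniformly random non-sink vertex and then stabilises by the ASM, a stable configuration is deterministically recurrent if it is a recurrent state (appears infinitely often). *)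

theory Defs
  imports Main
begin

text \<open>Vertices of K^0_{m,n}: Top 0 is the sink, Top 1..Top m the non-sink top
vertices, Bot 1..Bot n the bottom vertices.\<close>
datatype vert = Top nat | Bot nat

definition is_vertex :: "nat \<Rightarrow> nat \<Rightarrow> vert \<Rightarrow> bool" where
  "is_vertex m n v = (case v of Top i \<Rightarrow> i \<le> m | Bot j \<Rightarrow> 1 \<le> j \<and> j \<le> n)"

definition nonsink :: "nat \<Rightarrow> nat \<Rightarrow> vert \<Rightarrow> bool" where
  "nonsink m n v = (case v of Top i \<Rightarrow> 1 \<le> i \<and> i \<le> m | Bot j \<Rightarrow> 1 \<le> j \<and> j \<le> n)"

definition adj :: "nat \<Rightarrow> nat \<Rightarrow> vert \<Rightarrow> vert \<Rightarrow> bool" where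
  "adj m n u w = (is_vertex m n u \<and> is_vertex m n w \<and>
     ((\<exists>i j. u = Top i \<and> w = Bot j) \<or> (\<exists>i j. u = Bot j \<and> w = Top i)))"

definition deg :: "nat \<Rightarrow> nat \<Rightarrow> vert \<Rightarrow> nat" where
  "deg m n v = (case v of Top _ \<Rightarrow> n | Bot _ \<Rightarrow> m + 1)"

definition config :: "nat \<Rightarrow> nat \<Rightarrow> (vert \<Rightarrow> nat) \<Rightarrow> bool" where
  "config m n c = (\<forall>v. \<not> nonsink m n v \<longrightarrow> c v = 0)"

definition stable :: "nat \<Rightarrow> nat \<Rightarrow> (vert \<Rightarrow> nat) \<Rightarrow> bool" where
  "stable m n c = (config m n c \<and> (\<forall>v. nonsink m n v \<longrightarrow> c v < deg m n v))"

definition topple :: "nat \<Rightarrow> nat \<Rightarrow> vert \<Rightarrow> (vert \<Rightarrow> nat) \<Rightarrow> (vert \<Rightarrow> nat)" where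
  "topple m n v c = (\<lambda>w. if nonsink m n w
      then (if w = v then c w - deg m n v else c w) + (if adj m n v w then 1 else 0)
      else 0)"

definition topple_step :: "nat \<Rightarrow> nat \<Rightarrow> (vert \<Rightarrow> nat) \<Rightarrow> (vert \<Rightarrow> nat) \<Rightarrow> bool" where
  "topple_step m n c c' = (\<exists>v. nonsink m n v \<and> deg m n v \<le> c v \<and> c' = topple m n v c)"

definition add_grain :: "vert \<Rightarrow> (vert \<Rightarrow> nat) \<Rightarrow> (vert \<Rightarrow> nat)" where
  "add_grain v c = c(v := c v + 1)"

text \<open>Transitions of the Markov chain with positive probability: add a grain at
some non-sink vertex (each chosen with probability 1/(m+n) > 0) and stabilise
(the stabilisation is unique, so this relation is its graph).\<close>
definition chain_step :: "nat \<Rightarrow> nat \<Rightarrow> (vert \<Rightarrow> nat) \<Rightarrow> (vert \<Rightarrow> nat) \<Rightarrow> bool" where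
  "chain_step m n c c' = (stable m n c \<and> stable m n c' \<and>
     (\<exists>v. nonsink m n v \<and> (topple_step m n)\<^sup>*\<^sup>* (add_grain v c) c'))"

text \<open>Recurrent state of a finite-state Markov chain: every state reachable from it
can reach it back (i.e. it lies in a closed communicating class).\<close>
definition det_recurrent :: "nat \<Rightarrow> nat \<Rightarrow> (vert \<Rightarrow> nat) \<Rightarrow> bool" where
  "det_recurrent m n c = (stable m n c \<and>
     (\<forall>c'. (chain_step m n)\<^sup>*\<^sup>* c c' \<longrightarrow> (chain_step m n)\<^sup>*\<^sup>* c' c))"

end

(* Every stable configuration lies below the maximal stable configuration c_max, and adding
   the difference grain by grain shows that c_max is reachable from every state; so c is
   recurrent iff it is reachable from c_max.  With k_j the number of top vertices holding fewer
   than j grains, the sorted condition says that for every j fewer than j bottom vertices hold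
   fewer than k_j grains.  This holds for c_max and survives adding grains and every single
   toppling, hence every chain step.  Conversely, if it holds for c, the burning algorithm
   succeeds: after one grain is added to each bottom vertex (what toppling the sink would
   deliver), every non-sink vertex topples exactly once and c reappears.  Adding 2m + 1 such
   rounds and toppling each bottom vertex once gives a configuration above c_max that still
   stabilises to c, so c is reachable from c_max.  Stabilisation exists because a weighted grain
   count drops with every toppling, and it is unique because toppling has the diamond property. *)

theory Submission
  imports Defs "HOL-Library.Function_Algebras" "HOL-Library.Confluence"
begin

lemma topple_Top_Top [simp]:
  "1 \<le> i' \<Longrightarrow> i' \<le> m \<Longrightarrow>
    topple m n (Top i) a (Top i') = (if i' = i then a (Top i') - n else a (Top i'))"
  by (simp add: topple_def nonsink_def adj_def deg_def)

lemma topple_Top_Bot [simp]: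
  "1 \<le> l \<Longrightarrow> l \<le> n \<Longrightarrow> i \<le> m \<Longrightarrow> topple m n (Top i) a (Bot l) = a (Bot l) + 1"
  by (simp add: topple_def nonsink_def adj_def deg_def is_vertex_def)

lemma topple_Bot_Top [simp]:
  "1 \<le> i \<Longrightarrow> i \<le> m \<Longrightarrow> 1 \<le> l \<Longrightarrow> l \<le> n \<Longrightarrow> topple m n (Bot l) a (Top i) = a (Top i) + 1"
  by (simp add: topple_def nonsink_def adj_def deg_def is_vertex_def)

lemma topple_Bot_Bot [simp]:
  "1 \<le> l' \<Longrightarrow> l' \<le> n \<Longrightarrow>
    topple m n (Bot l) a (Bot l') = (if l' = l then a (Bot l') - (m + 1) else a (Bot l'))"
  by (simp add: topple_def nonsink_def adj_def deg_def)

lemma config_topple: "config m n (topple m n v a)"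
  by (simp add: config_def topple_def)

lemma stable_not_topple_step: "stable m n a \<Longrightarrow> \<not> topple_step m n a b"
  by (auto simp: stable_def topple_step_def not_le[symmetric])

lemma stable_topple_steps_eq: "stable m n a \<Longrightarrow> (topple_step m n)\<^sup>*\<^sup>* a b \<Longrightarrow> b = a"
  by (erule converse_rtranclpE) (auto dest: stable_not_topple_step)

lemma finite_nonsink: "finite {v. nonsink m n v}"
proof (rule finite_subset)
  show "{v. nonsink m n v} \<subseteq> Top ` {1..m} \<union> Bot ` {1..n}"
  proof
    fix v assume "v \<in> {v. nonsink m n v}"
    then show "v \<in> Top ` {1..m} \<union> Bot ` {1..n}"
      by (cases v) (auto simp: nonsink_def)
  qed
qed simp

subsection \<open>Termination\<close>

lemma sum_decrease_at:
  fixes f g :: "'a \<Rightarrow> 'b::comm_monoid_add"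
  assumes "finite A" "x \<in> A" "g x + d = f x" "\<And>y. y \<in> A \<Longrightarrow> y \<noteq> x \<Longrightarrow> g y = f y"
  shows "sum g A + d = sum f A"
proof -
  have "sum g (A - {x}) = sum f (A - {x})"
    using assms(4) by (intro sum.cong) auto
  then have "sum g A + d = (g x + d) + sum f (A - {x})"
    by (simp add: sum.remove[OF assms(1,2)] ac_simps)
  then show ?thesis
    using assms(3) by (simp add: sum.remove[OF assms(1,2)])
qed

text \<open>The weights are chosen so that toppling a top vertex costs \<open>(m + 2) n - (m + 1) n = n\<close>
  and toppling a bottom vertex costs \<open>(m + 1)\<^sup>2 - m (m + 2) = 1\<close>.\<close>
definition topple_potential :: "nat \<Rightarrow> nat \<Rightarrow> (vert \<Rightarrow> nat) \<Rightarrow> nat" where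
  "topple_potential m n a = (m + 2) * (\<Sum>i=1..m. a (Top i)) + (m + 1) * (\<Sum>l=1..n. a (Bot l))"

lemma topple_potential_topple_Top:
  assumes "1 \<le> i" "i \<le> m" "n \<le> a (Top i)"
  shows "topple_potential m n (topple m n (Top i) a) + n = topple_potential m n a"
proof -
  let ?b = "topple m n (Top i) a"
  have tops: "(\<Sum>i'=1..m. ?b (Top i')) + n = (\<Sum>i'=1..m. a (Top i'))"
    by (rule sum_decrease_at) (use assms in auto)
  have bots: "(\<Sum>l=1..n. ?b (Bot l)) = (\<Sum>l=1..n. a (Bot l)) + n"
    using assms by (simp add: sum_Suc)
  show ?thesis
    unfolding topple_potential_def tops[symmetric] bots by (simp add: algebra_simps)
qed

lemma topple_potential_topple_Bot:
  assumes "1 \<le> l" "l \<le> n" "m + 1 \<le> a (Bot l)"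
  shows "topple_potential m n (topple m n (Bot l) a) + 1 = topple_potential m n a"
proof -
  let ?b = "topple m n (Bot l) a"
  have bots: "(\<Sum>l'=1..n. ?b (Bot l')) + (m + 1) = (\<Sum>l'=1..n. a (Bot l'))"
    by (rule sum_decrease_at) (use assms in auto)
  have tops: "(\<Sum>i=1..m. ?b (Top i)) = (\<Sum>i=1..m. a (Top i)) + m"
    using assms by (simp add: sum_Suc)
  show ?thesis
    unfolding topple_potential_def bots[symmetric] tops by (simp add: algebra_simps)
qed

lemma topple_potential_decreases:
  assumes "1 \<le> n" "topple_step m n a b"
  shows "topple_potential m n b < topple_potential m n a"
proof -
  obtain v where v: "nonsink m n v" "deg m n v \<le> a v" "b = topple m n v a"
    using assms(2) by (auto simp: topple_step_def)
  show ?thesis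
  proof (cases v)
    case (Top i)
    then show ?thesis
      using v topple_potential_topple_Top[of i m n a] assms(1) by (auto simp: nonsink_def deg_def)
  next
    case (Bot l)
    then show ?thesis
      using v topple_potential_topple_Bot[of l n m a] by (auto simp: nonsink_def deg_def)
  qed
qed

lemma stabilisation_exists:
  assumes "1 \<le> n" "config m n a"
  shows "\<exists>s. (topple_step m n)\<^sup>*\<^sup>* a s \<and> stable m n s"
  using assms(2)
proof (induction "topple_potential m n a" arbitrary: a rule: less_induct)
  case less
  show ?case
  proof (cases "\<exists>v. nonsink m n v \<and> deg m n v \<le> a v")
    case True
    then obtain b where step: "topple_step m n a b"
      by (auto simp: topple_step_def)
    moreover have "config m n b"
      using step by (auto simp: topple_step_def config_topple)
    ultimately obtain s where "(topple_step m n)\<^sup>*\<^sup>* b s" "stable m n s"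
      using less.hyps topple_potential_decreases[OF assms(1)] by blast
    then show ?thesis
      using step by (meson converse_rtranclp_into_rtranclp)
  next
    case False
    then show ?thesis
      using less.prems by (auto simp: stable_def not_le)
  qed
qed

subsection \<open>Confluence\<close>

lemma topple_commute:
  assumes "v \<noteq> w" "deg m n v \<le> a v" "deg m n w \<le> a w"
  shows "topple m n w (topple m n v a) = topple m n v (topple m n w a)"
  using assms by (auto simp: topple_def fun_eq_iff)

lemma topple_keeps_unstable:
  assumes "v \<noteq> w" "deg m n w \<le> a w"
  shows "deg m n w \<le> topple m n v a w \<or> \<not> nonsink m n w"
  using assms by (auto simp: topple_def)

lemma strong_confluentp_topple_step: "strong_confluentp (topple_step m n)"
proof
  fix a b1 b2
  assume step1: "topple_step m n a b1" and step2: "topple_step m n a b2"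
  show "\<exists>u. (topple_step m n)\<^sup>*\<^sup>* b1 u \<and> (topple_step m n)\<^sup>=\<^sup>= b2 u"
  proof (cases "b1 = b2")
    case False
    obtain v where v: "nonsink m n v" "deg m n v \<le> a v" "b1 = topple m n v a"
      using step1 by (auto simp: topple_step_def)
    obtain w where w: "nonsink m n w" "deg m n w \<le> a w" "b2 = topple m n w a"
      using step2 by (auto simp: topple_step_def)
    have "v \<noteq> w"
      using False v w by auto
    then have "topple_step m n b1 (topple m n w b1)" "topple_step m n b2 (topple m n w b1)"
      using v w topple_keeps_unstable[of v w m n a] topple_keeps_unstable[of w v m n a]
        topple_commute[of v w m n a] by (auto simp: topple_step_def)
    then show ?thesis
      by blast
  qed blast
qed

lemma stabilisation_from_intermediate:
  assumes "(topple_step m n)\<^sup>*\<^sup>* a b" "(topple_step m n)\<^sup>*\<^sup>* a s" "stable m n s"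
  shows "(topple_step m n)\<^sup>*\<^sup>* b s"
proof -
  obtain u where "(topple_step m n)\<^sup>*\<^sup>* b u" "(topple_step m n)\<^sup>*\<^sup>* s u"
    using confluentpD[OF strong_confluentp_imp_confluentp[OF strong_confluentp_topple_step]
        assms(1,2)] by blast
  then show ?thesis
    using stable_topple_steps_eq[OF assms(3)] by blast
qed

lemma topple_add:
  assumes "config m n y" "deg m n v \<le> a v"
  shows "topple m n v (a + y) = topple m n v a + y"
  using assms by (auto simp: topple_def fun_eq_iff config_def)

lemma topple_steps_add:
  assumes "config m n y" "(topple_step m n)\<^sup>*\<^sup>* a b"
  shows "(topple_step m n)\<^sup>*\<^sup>* (a + y) (b + y)"
  using assms(2)
proof (induction rule: rtranclp_induct)
  case (step b c)
  then have "topple_step m n (b + y) (c + y)"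
    using topple_add[OF assms(1)] by (fastforce simp: topple_step_def)
  with step.IH show ?case
    by (meson rtranclp.rtrancl_into_rtrancl)
qed simp

lemma chain_steps_stable: "(chain_step m n)\<^sup>*\<^sup>* c c' \<Longrightarrow> stable m n c \<Longrightarrow> stable m n c'"
  by (induction rule: rtranclp_induct) (auto simp: chain_step_def)

lemma config_less_at_nonsink:
  assumes "config m n d" "config m n a" "d \<le> a" "a \<noteq> d"
  obtains v where "nonsink m n v" "d v < a v"
proof -
  obtain v where v: "a v \<noteq> d v"
    using assms(4) by auto
  then have "nonsink m n v"
    using assms(1,2) unfolding config_def by metis
  moreover have "d v < a v"
    using assms(3) v by (simp add: le_fun_def order.strict_iff_order)
  ultimately show ?thesis
    by (rule that)
qed

text \<open>Adding the grains of \<open>a - d\<close> one at a time and stabilising after each is a path of the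
  chain; by confluence it ends where the stabilisation of \<open>a\<close> ends.\<close>
lemma chain_steps_to_stabilisation_of_larger:
  assumes "1 \<le> n" "stable m n d" "config m n a" "d \<le> a"
    "(topple_step m n)\<^sup>*\<^sup>* a s" "stable m n s"
  shows "(chain_step m n)\<^sup>*\<^sup>* d s"
  using assms(2-)
proof (induction "sum (a - d) {v. nonsink m n v}" arbitrary: a d rule: less_induct)
  case less
  show ?case
  proof (cases "a = d")
    case True
    then show ?thesis
      using less.prems stable_topple_steps_eq by blast
  next
    case False
    then obtain v where v: "nonsink m n v" "d v < a v"
      using less.prems(1-3) by (auto simp: stable_def intro: config_less_at_nonsink)
    define d1 where "d1 = add_grain v d"
    have "config m n d1"
      using less.prems(1) v(1) by (auto simp: stable_def config_def d1_def add_grain_def)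
    then obtain d2 where d2: "(topple_step m n)\<^sup>*\<^sup>* d1 d2" "stable m n d2"
      using stabilisation_exists[OF assms(1)] by blast
    have chain: "chain_step m n d d2"
      unfolding chain_step_def using less.prems(1) d2 v(1) d1_def by blast
    have d1_le: "d1 \<le> a"
      using less.prems(3) v(2) by (auto simp: le_fun_def d1_def add_grain_def)
    have config_rest: "config m n (a - d1)"
      using less.prems(2) by (simp add: config_def)
    have "(topple_step m n)\<^sup>*\<^sup>* (d1 + (a - d1)) (d2 + (a - d1))"
      by (rule topple_steps_add[OF config_rest d2(1)])
    moreover have "d1 + (a - d1) = a"
      using d1_le by (auto simp: le_fun_def fun_eq_iff)
    ultimately have "(topple_step m n)\<^sup>*\<^sup>* (d2 + (a - d1)) s"
      using stabilisation_from_intermediate less.prems(4,5) by metis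
    moreover have "sum (a - d1) {v. nonsink m n v} + 1 = sum (a - d) {v. nonsink m n v}"
      by (rule sum_decrease_at) (use v in \<open>auto simp: finite_nonsink d1_def add_grain_def\<close>)
    moreover have "config m n (d2 + (a - d1))"
      using d2(2) config_rest by (simp add: stable_def config_def)
    ultimately have "(chain_step m n)\<^sup>*\<^sup>* d2 s"
      using less.hyps[of "d2 + (a - d1)" d2] d2(2) less.prems(5) by (simp add: le_fun_def)
    with chain show ?thesis
      by (rule converse_rtranclp_into_rtranclp)
  qed
qed

subsection \<open>Recurrence as reachability from the maximal stable configuration\<close>

definition max_stable :: "nat \<Rightarrow> nat \<Rightarrow> vert \<Rightarrow> nat" where
  "max_stable m n = (\<lambda>v. if nonsink m n v then deg m n v - 1 else 0)"

lemma stable_max_stable: "1 \<le> n \<Longrightarrow> stable m n (max_stable m n)"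
  by (auto simp: stable_def config_def max_stable_def deg_def split: vert.splits)

lemma chain_steps_to_max_stable:
  assumes "1 \<le> n" "stable m n c"
  shows "(chain_step m n)\<^sup>*\<^sup>* c (max_stable m n)"
proof (rule chain_steps_to_stabilisation_of_larger[OF assms _ _ _ stable_max_stable[OF assms(1)]])
  show "config m n (max_stable m n)"
    by (simp add: config_def max_stable_def)
  show "c \<le> max_stable m n"
    using assms(2) by (auto simp: le_fun_def stable_def config_def max_stable_def)
qed simp

lemma det_recurrent_iff_chain_steps_from_max_stable:
  assumes "1 \<le> n" "stable m n c"
  shows "det_recurrent m n c \<longleftrightarrow> (chain_step m n)\<^sup>*\<^sup>* (max_stable m n) c"
proof
  assume "det_recurrent m n c"
  then show "(chain_step m n)\<^sup>*\<^sup>* (max_stable m n) c"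
    using chain_steps_to_max_stable[OF assms] by (simp add: det_recurrent_def)
next
  assume from_max: "(chain_step m n)\<^sup>*\<^sup>* (max_stable m n) c"
  have "(chain_step m n)\<^sup>*\<^sup>* c' c" if "(chain_step m n)\<^sup>*\<^sup>* c c'" for c'
    using chain_steps_to_max_stable[OF assms(1) chain_steps_stable[OF that assms(2)]] from_max
    by (rule rtranclp_trans)
  then show "det_recurrent m n c"
    using assms(2) by (simp add: det_recurrent_def)
qed

subsection \<open>The criterion and its invariance\<close>

definition tops_below :: "nat \<Rightarrow> (vert \<Rightarrow> nat) \<Rightarrow> nat \<Rightarrow> nat" where
  "tops_below m c j = card {i \<in> {1..m}. c (Top i) < j}"

definition bottoms_below :: "nat \<Rightarrow> (vert \<Rightarrow> nat) \<Rightarrow> nat \<Rightarrow> nat" where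
  "bottoms_below n c k = card {l \<in> {1..n}. c (Bot l) < k}"

definition bottoms_dominate :: "nat \<Rightarrow> nat \<Rightarrow> (vert \<Rightarrow> nat) \<Rightarrow> bool" where
  "bottoms_dominate m n c \<longleftrightarrow> (\<forall>j\<in>{1..n}. bottoms_below n c (tops_below m c j) < j)"

lemma bottoms_below_mono: "k \<le> k' \<Longrightarrow> bottoms_below n c k \<le> bottoms_below n c k'"
  unfolding bottoms_below_def by (rule card_mono) auto

lemma bottoms_below_antimono: "c \<le> c' \<Longrightarrow> bottoms_below n c' k \<le> bottoms_below n c k"
  unfolding bottoms_below_def by (rule card_mono) (auto simp: le_fun_def intro: le_less_trans)

lemma tops_below_antimono: "c \<le> c' \<Longrightarrow> tops_below m c' j \<le> tops_below m c j"
  unfolding tops_below_def by (rule card_mono) (auto simp: le_fun_def intro: le_less_trans)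

lemma bottoms_dominate_mono:
  assumes "bottoms_dominate m n c" "c \<le> c'"
  shows "bottoms_dominate m n c'"
  unfolding bottoms_dominate_def
proof
  fix j assume j: "j \<in> {1..n}"
  have "bottoms_below n c' (tops_below m c' j) \<le> bottoms_below n c' (tops_below m c j)"
    using tops_below_antimono[OF assms(2)] by (rule bottoms_below_mono)
  also have "\<dots> \<le> bottoms_below n c (tops_below m c j)"
    using assms(2) by (rule bottoms_below_antimono)
  also have "\<dots> < j"
    using assms(1) j by (simp add: bottoms_dominate_def)
  finally show "bottoms_below n c' (tops_below m c' j) < j" .
qed

text \<open>Toppling a top vertex raises \<open>k\<^sub>j\<close> by at most one, but it also gives every bottom
  vertex one more grain.\<close>
lemma bottoms_dominate_topple_Top:
  assumes "bottoms_dominate m n c" "1 \<le> i" "i \<le> m"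
  shows "bottoms_dominate m n (topple m n (Top i) c)"
  unfolding bottoms_dominate_def
proof
  let ?c = "topple m n (Top i) c"
  fix j assume j: "j \<in> {1..n}"
  have "tops_below m ?c j \<le> card (insert i {i' \<in> {1..m}. c (Top i') < j})"
    unfolding tops_below_def by (rule card_mono) auto
  also have "\<dots> \<le> tops_below m c j + 1"
    by (simp add: tops_below_def card_insert_if)
  finally have "bottoms_below n ?c (tops_below m ?c j) \<le> bottoms_below n ?c (tops_below m c j + 1)"
    by (rule bottoms_below_mono)
  also have "\<dots> \<le> bottoms_below n c (tops_below m c j)"
    unfolding bottoms_below_def by (rule card_mono) (use assms in auto)
  also have "\<dots> < j"
    using assms(1) j by (simp add: bottoms_dominate_def)
  finally show "bottoms_below n ?c (tops_below m ?c j) < j" .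
qed

text \<open>Toppling a bottom vertex gives every top vertex one more grain, turning \<open>k\<^sub>j\<close> into
  \<open>k\<^sub>j\<^sub>-\<^sub>1\<close>, while only one bottom vertex loses grains.\<close>
lemma bottoms_dominate_topple_Bot:
  assumes "bottoms_dominate m n c" "1 \<le> l" "l \<le> n"
  shows "bottoms_dominate m n (topple m n (Bot l) c)"
  unfolding bottoms_dominate_def
proof
  let ?c = "topple m n (Bot l) c"
  fix j assume j: "j \<in> {1..n}"
  show "bottoms_below n ?c (tops_below m ?c j) < j"
  proof (cases "j = 1")
    case True
    then have "tops_below m ?c j = 0"
      using assms(2,3) by (auto simp: tops_below_def)
    then show ?thesis
      using True by (simp add: bottoms_below_def)
  next
    case False
    have "j - 1 \<in> {1..n}"
      using j False by auto
    then have below: "bottoms_below n c (tops_below m c (j - 1)) < j - 1"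
      using assms(1) unfolding bottoms_dominate_def by blast
    have tops: "tops_below m ?c j = tops_below m c (j - 1)"
      unfolding tops_below_def by (rule arg_cong[where f = card]) (use assms in auto)
    have "bottoms_below n ?c k \<le> bottoms_below n c k + 1" for k
    proof -
      have "bottoms_below n ?c k \<le> card (insert l {l' \<in> {1..n}. c (Bot l') < k})"
        unfolding bottoms_below_def by (rule card_mono) auto
      also have "\<dots> \<le> bottoms_below n c k + 1"
        by (simp add: bottoms_below_def card_insert_if)
      finally show ?thesis .
    qed
    then show ?thesis
      using below unfolding tops by (meson add_less_cancel_right le_less_trans less_diff_conv)
  qed
qed

lemma bottoms_dominate_topple_steps:
  assumes "(topple_step m n)\<^sup>*\<^sup>* c c'" "bottoms_dominate m n c"
  shows "bottoms_dominate m n c'"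
  using assms(1)
proof (induction rule: rtranclp_induct)
  case (step b b')
  then obtain v where v: "nonsink m n v" "b' = topple m n v b"
    by (auto simp: topple_step_def)
  then show ?case
    using step.IH bottoms_dominate_topple_Top bottoms_dominate_topple_Bot
    by (cases v) (auto simp: nonsink_def)
qed (rule assms(2))

lemma bottoms_dominate_chain_steps:
  assumes "(chain_step m n)\<^sup>*\<^sup>* c c'" "bottoms_dominate m n c"
  shows "bottoms_dominate m n c'"
  using assms(1)
proof (induction rule: rtranclp_induct)
  case (step b b')
  then obtain v where "(topple_step m n)\<^sup>*\<^sup>* (add_grain v b) b'"
    by (auto simp: chain_step_def)
  moreover have "bottoms_dominate m n (add_grain v b)"
    using step.IH by (rule bottoms_dominate_mono) (simp add: le_fun_def add_grain_def)
  ultimately show ?case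
    by (rule bottoms_dominate_topple_steps)
qed (rule assms(2))

lemma bottoms_dominate_max_stable: "bottoms_dominate m n (max_stable m n)"
  unfolding bottoms_dominate_def
proof
  fix j assume j: "j \<in> {1..n}"
  show "bottoms_below n (max_stable m n) (tops_below m (max_stable m n) j) < j"
  proof (cases "j < n")
    case True
    then have "tops_below m (max_stable m n) j = 0"
      by (auto simp: tops_below_def max_stable_def nonsink_def deg_def)
    then show ?thesis
      using j by (simp add: bottoms_below_def)
  next
    case False
    have "tops_below m (max_stable m n) j \<le> card {1..m}"
      unfolding tops_below_def by (rule card_mono) auto
    then have "bottoms_below n (max_stable m n) (tops_below m (max_stable m n) j)
        \<le> bottoms_below n (max_stable m n) m"
      by (intro bottoms_below_mono) simp
    also have "\<dots> = 0"
      by (auto simp: bottoms_below_def max_stable_def nonsink_def deg_def)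
    finally show ?thesis
      using j by simp
  qed
qed

subsection \<open>The burning algorithm\<close>

text \<open>For \<open>k = 1\<close> this is what toppling the sink would deliver.\<close>
definition bottom_grains :: "nat \<Rightarrow> nat \<Rightarrow> vert \<Rightarrow> nat" where
  "bottom_grains n k = (\<lambda>v. case v of Top _ \<Rightarrow> 0 | Bot l \<Rightarrow> if 1 \<le> l \<and> l \<le> n then k else 0)"

lemma bottom_grains_simps [simp]:
  "bottom_grains n k (Top i) = 0"
  "1 \<le> l \<Longrightarrow> l \<le> n \<Longrightarrow> bottom_grains n k (Bot l) = k"
  by (simp_all add: bottom_grains_def)

lemma config_bottom_grains: "config m n (bottom_grains n k)"
  by (auto simp: config_def bottom_grains_def nonsink_def split: vert.splits)

text \<open>The result of toppling every top vertex in \<open>P\<close> and every bottom vertex in \<open>Q\<close> once,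
  provided \<open>topple_sets_valid\<close> holds, i.e. none of the subtractions truncates.\<close>
definition topple_sets :: "nat \<Rightarrow> nat \<Rightarrow> (vert \<Rightarrow> nat) \<Rightarrow> nat set \<Rightarrow> nat set \<Rightarrow> vert \<Rightarrow> nat" where
  "topple_sets m n a P Q = (\<lambda>v. case v of
     Top i \<Rightarrow> if 1 \<le> i \<and> i \<le> m then a (Top i) + card Q - (if i \<in> P then n else 0) else 0
   | Bot l \<Rightarrow> if 1 \<le> l \<and> l \<le> n then a (Bot l) + card P - (if l \<in> Q then m + 1 else 0) else 0)"

definition topple_sets_valid :: "nat \<Rightarrow> nat \<Rightarrow> (vert \<Rightarrow> nat) \<Rightarrow> nat set \<Rightarrow> nat set \<Rightarrow> bool" where
  "topple_sets_valid m n a P Q \<longleftrightarrow> P \<subseteq> {1..m} \<and> Q \<subseteq> {1..n} \<and>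
     (\<forall>i\<in>P. n \<le> a (Top i) + card Q) \<and> (\<forall>l\<in>Q. m + 1 \<le> a (Bot l) + card P)"

lemma topple_sets_empty: "config m n a \<Longrightarrow> topple_sets m n a {} {} = a"
  by (auto simp: topple_sets_def config_def nonsink_def fun_eq_iff split: vert.splits)

lemma topple_sets_valid_empty: "topple_sets_valid m n a {} {}"
  by (simp add: topple_sets_valid_def)

lemma topple_sets_insert_Top:
  assumes valid: "topple_sets_valid m n a P Q"
    and i: "i \<in> {1..m}" "i \<notin> P" "n \<le> a (Top i) + card Q"
  shows "topple_step m n (topple_sets m n a P Q) (topple_sets m n a (insert i P) Q)"
    and "topple_sets_valid m n a (insert i P) Q"
proof -
  have "finite P"
    using valid finite_subset by (auto simp: topple_sets_valid_def)
  then have "topple m n (Top i) (topple_sets m n a P Q) = topple_sets m n a (insert i P) Q"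
    using valid i by (auto simp: topple_def topple_sets_def topple_sets_valid_def nonsink_def deg_def
        adj_def is_vertex_def fun_eq_iff split: vert.splits)
  moreover have "deg m n (Top i) \<le> topple_sets m n a P Q (Top i)"
    using i by (simp add: topple_sets_def deg_def)
  moreover have "nonsink m n (Top i)"
    using i by (simp add: nonsink_def)
  ultimately show "topple_step m n (topple_sets m n a P Q) (topple_sets m n a (insert i P) Q)"
    unfolding topple_step_def by metis
  show "topple_sets_valid m n a (insert i P) Q"
    using valid i \<open>finite P\<close> by (auto simp: topple_sets_valid_def)
qed

lemma topple_sets_insert_Bot:
  assumes valid: "topple_sets_valid m n a P Q"
    and l: "l \<in> {1..n}" "l \<notin> Q" "m + 1 \<le> a (Bot l) + card P"
  shows "topple_step m n (topple_sets m n a P Q) (topple_sets m n a P (insert l Q))"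
    and "topple_sets_valid m n a P (insert l Q)"
proof -
  have "finite Q"
    using valid finite_subset by (auto simp: topple_sets_valid_def)
  then have "topple m n (Bot l) (topple_sets m n a P Q) = topple_sets m n a P (insert l Q)"
    using valid l by (auto simp: topple_def topple_sets_def topple_sets_valid_def nonsink_def deg_def
        adj_def is_vertex_def fun_eq_iff split: vert.splits)
  moreover have "deg m n (Bot l) \<le> topple_sets m n a P Q (Bot l)"
    using l by (simp add: topple_sets_def deg_def)
  moreover have "nonsink m n (Bot l)"
    using l by (simp add: nonsink_def)
  ultimately show "topple_step m n (topple_sets m n a P Q) (topple_sets m n a P (insert l Q))"
    unfolding topple_step_def by metis
  show "topple_sets_valid m n a P (insert l Q)"
    using valid l \<open>finite Q\<close> by (auto simp: topple_sets_valid_def)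
qed

text \<open>If the burning got stuck with \<open>Q \<noteq> {1..n}\<close>, take \<open>j = n - |Q|\<close>: the \<open>m - |P|\<close>
  unburnt tops all hold fewer than \<open>j\<close> grains and the \<open>j\<close> unburnt bottoms all hold fewer than
  \<open>m - |P| \<le> k\<^sub>j\<close>, contradicting the criterion at \<open>j\<close>.\<close>
lemma burning_can_continue:
  assumes crit: "bottoms_dominate m n c" and "P \<subseteq> {1..m}" "Q \<subseteq> {1..n}"
    and unburnt: "P \<noteq> {1..m} \<or> Q \<noteq> {1..n}"
  shows "(\<exists>i\<in>{1..m} - P. n \<le> c (Top i) + card Q) \<or> (\<exists>l\<in>{1..n} - Q. m \<le> c (Bot l) + card P)"
proof (rule ccontr)
  assume "\<not> ?thesis"
  then have tops: "\<forall>i\<in>{1..m} - P. c (Top i) < n - card Q"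
    and bots: "\<forall>l\<in>{1..n} - Q. c (Bot l) < m - card P"
    by force+
  have "finite P" "finite Q"
    using assms(2,3) finite_subset by blast+
  show False
  proof (cases "Q = {1..n}")
    case True
    then show False
      using tops unburnt assms(2) by auto
  next
    case False
    define j where "j = n - card Q"
    have "card Q < n"
      using False assms(3) psubset_card_mono[of "{1..n}" Q] by auto
    then have j: "j \<in> {1..n}"
      by (auto simp: j_def)
    have "m - card P = card ({1..m} - P)"
      using assms(2) \<open>finite P\<close> by (simp add: card_Diff_subset)
    also have "\<dots> \<le> tops_below m c j"
      unfolding tops_below_def j_def by (rule card_mono) (use tops in auto)
    finally have "bottoms_below n c (m - card P) \<le> bottoms_below n c (tops_below m c j)"
      by (rule bottoms_below_mono)
    moreover have "j = card ({1..n} - Q)"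
      using assms(3) \<open>finite Q\<close> by (simp add: card_Diff_subset j_def)
    moreover have "\<dots> \<le> bottoms_below n c (m - card P)"
      unfolding bottoms_below_def by (rule card_mono) (use bots in auto)
    moreover have "bottoms_below n c (tops_below m c j) < j"
      using crit j by (simp add: bottoms_dominate_def)
    ultimately show False
      by linarith
  qed
qed

lemma card_Diff_insert_less: "finite A \<Longrightarrow> x \<in> A - B \<Longrightarrow> card (A - insert x B) < card (A - B)"
  by (metis Diff_insert card_Diff1_less finite_Diff)

lemma burning_step:
  assumes crit: "bottoms_dominate m n c"
    and valid: "topple_sets_valid m n (c + bottom_grains n 1) P Q"
    and unburnt: "P \<noteq> {1..m} \<or> Q \<noteq> {1..n}"
  obtains P' Q' where
    "topple_step m n (topple_sets m n (c + bottom_grains n 1) P Q)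
       (topple_sets m n (c + bottom_grains n 1) P' Q')"
    "topple_sets_valid m n (c + bottom_grains n 1) P' Q'"
    "card ({1..m} - P') + card ({1..n} - Q') < card ({1..m} - P) + card ({1..n} - Q)"
proof -
  have P: "P \<subseteq> {1..m}" and Q: "Q \<subseteq> {1..n}"
    using valid by (auto simp: topple_sets_valid_def)
  from burning_can_continue[OF crit P Q unburnt] show ?thesis
  proof (elim disjE bexE)
    fix i assume "i \<in> {1..m} - P" "n \<le> c (Top i) + card Q"
    then show ?thesis
      using that[of "insert i P" Q] topple_sets_insert_Top[OF valid, of i]
        card_Diff_insert_less[of "{1..m}" i P] by simp
  next
    fix l assume "l \<in> {1..n} - Q" "m \<le> c (Bot l) + card P"
    then show ?thesis
      using that[of P "insert l Q"] topple_sets_insert_Bot[OF valid, of l]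
        card_Diff_insert_less[of "{1..n}" l Q] by simp
  qed
qed

lemma burning_topple_sets:
  assumes crit: "bottoms_dominate m n c"
    and valid: "topple_sets_valid m n (c + bottom_grains n 1) P Q"
  shows "(topple_step m n)\<^sup>*\<^sup>* (topple_sets m n (c + bottom_grains n 1) P Q)
           (topple_sets m n (c + bottom_grains n 1) {1..m} {1..n})"
  using valid
proof (induction "card ({1..m} - P) + card ({1..n} - Q)" arbitrary: P Q rule: less_induct)
  case less
  show ?case
  proof (cases "P = {1..m} \<and> Q = {1..n}")
    case False
    then obtain P' Q' where step:
      "topple_step m n (topple_sets m n (c + bottom_grains n 1) P Q)
         (topple_sets m n (c + bottom_grains n 1) P' Q')"
      and valid': "topple_sets_valid m n (c + bottom_grains n 1) P' Q'"
      and smaller: "card ({1..m} - P') + card ({1..n} - Q') < card ({1..m} - P) + card ({1..n} - Q)"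
      using burning_step[OF crit less.prems] by blast
    with less.hyps[OF smaller valid'] show ?thesis
      by (meson converse_rtranclp_into_rtranclp)
  qed simp
qed

lemma burning:
  assumes "bottoms_dominate m n c" "stable m n c"
  shows "(topple_step m n)\<^sup>*\<^sup>* (c + bottom_grains n 1) c"
proof -
  let ?a = "c + bottom_grains n 1"
  have "config m n c"
    using assms(2) by (simp add: stable_def)
  then have "topple_sets m n ?a {} {} = ?a" "topple_sets m n ?a {1..m} {1..n} = c"
    by (auto simp: topple_sets_empty config_bottom_grains config_def nonsink_def
        topple_sets_def bottom_grains_def fun_eq_iff split: vert.splits)
  then show ?thesis
    using burning_topple_sets[OF assms(1) topple_sets_valid_empty] by simp
qed

lemma burning_iterated:
  assumes "bottoms_dominate m n c" "stable m n c"
  shows "(topple_step m n)\<^sup>*\<^sup>* (c + bottom_grains n k) c"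
proof (induction k)
  case 0
  have "bottom_grains n 0 = 0"
    by (auto simp: bottom_grains_def fun_eq_iff split: vert.splits)
  then show ?case
    by simp
next
  case (Suc k)
  have "c + bottom_grains n (Suc k) = c + bottom_grains n 1 + bottom_grains n k"
    by (auto simp: bottom_grains_def fun_eq_iff split: vert.splits)
  moreover have "(topple_step m n)\<^sup>*\<^sup>* (c + bottom_grains n 1 + bottom_grains n k)
      (c + bottom_grains n k)"
    using config_bottom_grains burning[OF assms] by (rule topple_steps_add)
  ultimately show ?case
    using Suc.IH by (metis rtranclp_trans)
qed

lemma topple_all_bottoms:
  assumes "config m n a" "\<forall>l\<in>{1..n}. m + 1 \<le> a (Bot l)"
  shows "(topple_step m n)\<^sup>*\<^sup>* a (topple_sets m n a {} {1..n})"
proof -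
  have "(topple_step m n)\<^sup>*\<^sup>* a (topple_sets m n a {} Q) \<and> topple_sets_valid m n a {} Q"
    if "Q \<subseteq> {1..n}" for Q
    using finite_subset[OF that finite_atLeastAtMost] that
  proof (induction Q rule: finite_induct)
    case empty
    then show ?case
      using topple_sets_empty[OF assms(1)] topple_sets_valid_empty by simp
  next
    case (insert l Q)
    then show ?case
      using topple_sets_insert_Bot[of m n a "{}" Q l] assms(2)
      by (auto intro: rtranclp.rtrancl_into_rtrancl)
  qed
  then show ?thesis
    by blast
qed

text \<open>With \<open>2m + 1\<close> extra grains each bottom vertex keeps at least \<open>m\<close> grains after toppling
  once, and each top vertex receives \<open>n\<close> grains, so \<open>b\<close> lies above \<open>max_stable\<close>.\<close>
lemma chain_steps_from_max_stable:
  assumes "1 \<le> n" "bottoms_dominate m n c" "stable m n c"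
  shows "(chain_step m n)\<^sup>*\<^sup>* (max_stable m n) c"
proof -
  define a where "a = c + bottom_grains n (2 * m + 1)"
  define b where "b = topple_sets m n a {} {1..n}"
  have "config m n a"
    using assms(3) config_bottom_grains by (auto simp: a_def stable_def config_def)
  then have "(topple_step m n)\<^sup>*\<^sup>* a b"
    unfolding b_def by (rule topple_all_bottoms) (simp add: a_def)
  then have "(topple_step m n)\<^sup>*\<^sup>* b c"
    using stabilisation_from_intermediate burning_iterated[OF assms(2,3)] assms(3)
    unfolding a_def by blast
  moreover have "config m n b"
    by (auto simp: b_def topple_sets_def config_def nonsink_def split: vert.splits)
  moreover have "max_stable m n \<le> b"
    by (auto simp: le_fun_def b_def topple_sets_def a_def max_stable_def nonsink_def deg_def
        split: vert.splits)
  ultimately show ?thesis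
    using chain_steps_to_stabilisation_of_larger assms(1,3) stable_max_stable by blast
qed

subsection \<open>The sorted form of the criterion\<close>

lemma sorted_nth_ge_iff_length_filter_less:
  fixes ys :: "'a::linorder list"
  assumes "sorted ys" "1 \<le> j" "j \<le> length ys"
  shows "k \<le> ys ! (j - 1) \<longleftrightarrow> length (filter (\<lambda>x. x < k) ys) < j"
proof
  let ?I = "{i. i < length ys \<and> ys ! i < k}"
  show "length (filter (\<lambda>x. x < k) ys) < j" if "k \<le> ys ! (j - 1)"
  proof -
    have "?I \<subseteq> {..<j - 1}"
    proof
      fix i assume "i \<in> ?I"
      then have "\<not> j - 1 \<le> i"
        using that sorted_nth_mono[OF assms(1), of "j - 1" i] by auto
      then show "i \<in> {..<j - 1}"
        by simp
    qed
    then have "card ?I \<le> card {..<j - 1}"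
      by (intro card_mono) simp_all
    then have "card ?I \<le> j - 1"
      by simp
    then show ?thesis
      using assms(2) unfolding length_filter_conv_card by linarith
  qed
  show "k \<le> ys ! (j - 1)" if "length (filter (\<lambda>x. x < k) ys) < j"
  proof (rule ccontr)
    assume "\<not> k \<le> ys ! (j - 1)"
    have "{..<j} \<subseteq> ?I"
    proof
      fix i assume "i \<in> {..<j}"
      then have "i \<le> j - 1" "j - 1 < length ys"
        using assms(2,3) by auto
      then have "ys ! i \<le> ys ! (j - 1)"
        by (rule sorted_nth_mono[OF assms(1)])
      then show "i \<in> ?I"
        using \<open>\<not> k \<le> ys ! (j - 1)\<close> \<open>i \<le> j - 1\<close> \<open>j - 1 < length ys\<close> by auto
    qed
    then have "card {..<j} \<le> card ?I"
      by (intro card_mono) simp_all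
    then have "j \<le> card ?I"
      by simp
    then show False
      using that unfolding length_filter_conv_card by simp
  qed
qed

lemma length_filter_bottoms:
  "length (filter (\<lambda>x. x < k) (map (\<lambda>l. c (Bot l)) [1..<n+1])) = bottoms_below n c k"
proof -
  have "length (filter (\<lambda>x. x < k) (map (\<lambda>l. c (Bot l)) [1..<n+1]))
      = length (filter (\<lambda>l. c (Bot l) < k) [1..<n+1])"
    by (simp add: filter_map comp_def del: upt_Suc)
  also have "\<dots> = card (set (filter (\<lambda>l. c (Bot l) < k) [1..<n+1]))"
    by (rule distinct_card[symmetric]) (simp del: upt_Suc)
  also have "set (filter (\<lambda>l. c (Bot l) < k) [1..<n+1]) = {l \<in> {1..n}. c (Bot l) < k}"
    by (auto simp del: upt_Suc)
  finally show ?thesis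
    by (simp add: bottoms_below_def)
qed

lemma sorted_bound_iff_bottoms_dominate:
  "(\<forall>j\<in>{1..n}. sort (map (\<lambda>l. c (Bot l)) [1..<n+1]) ! (j - 1) \<ge> tops_below m c j)
    \<longleftrightarrow> bottoms_dominate m n c"
proof -
  let ?ys = "sort (map (\<lambda>l. c (Bot l)) [1..<n+1])"
  have "tops_below m c j \<le> ?ys ! (j - 1) \<longleftrightarrow> bottoms_below n c (tops_below m c j) < j"
    if "j \<in> {1..n}" for j
  proof -
    have "tops_below m c j \<le> ?ys ! (j - 1)
        \<longleftrightarrow> length (filter (\<lambda>x. x < tops_below m c j) ?ys) < j"
      using that by (intro sorted_nth_ge_iff_length_filter_less) (simp_all del: upt_Suc)
    also have "length (filter (\<lambda>x. x < tops_below m c j) ?ys) = bottoms_below n c (tops_below m c j)"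
      by (simp only: filter_sort length_sort length_filter_bottoms)
    finally show ?thesis .
  qed
  then show ?thesis
    unfolding bottoms_dominate_def by blast
qed

theorem theorem4p1:
  fixes m n :: nat and c :: "vert \<Rightarrow> nat"
  assumes "n \<ge> 1" and "stable m n c"
  shows "det_recurrent m n c \<longleftrightarrow>
    (\<forall>j\<in>{1..n}.
       sort (map (\<lambda>l. c (Bot l)) [1..<n+1]) ! (j - 1)
         \<ge> card {i \<in> {1..m}. c (Top i) < j})"
  unfolding tops_below_def[symmetric] sorted_bound_iff_bottoms_dominate
    det_recurrent_iff_chain_steps_from_max_stable[OF assms]
proof
  assume "(chain_step m n)\<^sup>*\<^sup>* (max_stable m n) c"
  then show "bottoms_dominate m n c"
    using bottoms_dominate_max_stable by (rule bottoms_dominate_chain_steps)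
next
  assume "bottoms_dominate m n c"
  then show "(chain_step m n)\<^sup>*\<^sup>* (max_stable m n) c"
    using chain_steps_from_max_stable assms by blast
qed

end
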